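(* Assume Assumptions A and B, where the intervention targets $i_1,\dots,i_K$ need not be distinct. Fix the DAG $\mathcal G$, the targets, and $H$. Then for all choices of the parameters (the diagonal and edge entries of $B_0$, and $\lambda_1,\dots,\lambda_K$) outside a Lebesgue-measure-zero subset of the parameter space, the following holds: for all distinct $k,\ell\in[K]$, $\mathrm{rank}(\Theta_k-\Theta_\ell)=1$ if and only if $i_k=i_\ell$.
   Context: Notation: $[d]=\{1,\dots,d\}$, $\mathbf e_i$ standard basis vectors, $M^\dagger$ the Moore–Penrose pseudoinverse. Assumption A (model). $\mathcal G$ is a DAG on $[d]$ whose nodes are ordered so that every edge $j\to i$ has $j>i$; a source node has no parents. Contexts $k\in\{0\}\cup[K]$. For each $k$, $A_k\in\mathbb R^{d\times d}$ has zero diagonal and $(A_k)_{ij}=0$ unless $j\to i$ is an edge of $\mathcal G$, and $(A_0)_{ij}\neq 0$ iff $j\to i$ is an edge; $\Omega_k$ is diagonal with positive diagonal; $B_k:=\Omega_k^{-1/2}(I_d-A_k)$ (so $B_0$ is upper triangular with positive diagonal and nonzero off-diagonal entries exactly at positions $(i,j)$ with $j\to i$ an edge). In context $k$, $Z=B_k^{-1}\varepsilon$ with $\mathrm{Cov}(\varepsilon)=I_d$. For each $k\in[K]$ there exist $i_k\in[d]$ and $\mathbf c_k\in\mathbb R^d$ with $B_k=B_0+\mathbf e_{i_k}\mathbf c_k^\top$, and $B_k^\top\mathbf e_{i_k}$ is not a scalar multiple of $B_0^\top\mathbf e_{i_k}$ unless $i_k$ is a source. $G\in\mathbb R^{p\times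 d}$ ($p\ge d$) has rank $d$, $X=GZ$ in every context, $H:=G^\dagger$, normalized so that in each row of $H$ the maximum absolute value of the entries is $1$ and the leftmost entry of absolute value $1$ equals $1$. The precision matrices are $\Theta_k=H^\top B_k^\top B_kH$. Assumption B (perfect interventions). For each $k\in[K]$, $\mathbf c_k=\lambda_k\mathbf e_{i_k}-B_0^\top\mathbf e_{i_k}$ for some $\lambda_k>0$. *)

theory Defs
  imports "HOL-Analysis.Analysis"
begin

datatype 'd param = Diag 'd | Edge 'd 'd | Lam nat

text \<open>Index set of the parameter space. A pair (j,i) in E encodes the edge j -> i;
  the corresponding entry of B_0 is at position (i,j).\<close>
definition param_index :: "('d \<times> 'd) set \<Rightarrow> nat \<Rightarrow> 'd param set" where
  "param_index E K = range Diag \<union> (\<lambda>(j,i). Edge i j) ` E \<union> Lam ` {1..K}"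

definition param_measure :: "('d \<times> 'd) set \<Rightarrow> nat \<Rightarrow> ('d param \<Rightarrow> real) measure" where
  "param_measure E K = Pi\<^sub>M (param_index E K) (\<lambda>_. lborel)"

definition admissible :: "('d \<times> 'd) set \<Rightarrow> nat \<Rightarrow> ('d param \<Rightarrow> real) \<Rightarrow> bool" where
  "admissible E K \<theta> \<longleftrightarrow>
     (\<forall>i. \<theta> (Diag i) > 0) \<and> (\<forall>(j,i)\<in>E. \<theta> (Edge i j) \<noteq> 0) \<and> (\<forall>k\<in>{1..K}. \<theta> (Lam k) > 0)"

definition B0 :: "('d::finite \<times> 'd) set \<Rightarrow> ('d param \<Rightarrow> real) \<Rightarrow> real^'d^'d" where
  "B0 E \<theta> = (\<chi> i j. if i = j then \<theta> (Diag i) else if (j,i) \<in> E then \<theta> (Edge i j) else 0)"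

text \<open>B_k = B_0 + e_{i_k} c_k^T with c_k = lambda_k e_{i_k} - B_0^T e_{i_k} (Assumption B).\<close>
definition Bk :: "('d::finite \<times> 'd) set \<Rightarrow> (nat \<Rightarrow> 'd) \<Rightarrow> ('d param \<Rightarrow> real) \<Rightarrow> nat \<Rightarrow> real^'d^'d" where
  "Bk E tgt \<theta> k =
     (let c = \<theta> (Lam k) *\<^sub>R axis (tgt k) 1 - transpose (B0 E \<theta>) *v axis (tgt k) 1
      in \<chi> i j. B0 E \<theta> $ i $ j + (if i = tgt k then c $ j else 0))"

definition Theta :: "('d::finite \<times> 'd) set \<Rightarrow> (nat \<Rightarrow> 'd) \<Rightarrow> real^'p^'d \<Rightarrow> ('d param \<Rightarrow> real) \<Rightarrow> nat \<Rightarrow> real^'p^'p" where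
  "Theta E tgt H \<theta> k = transpose H ** transpose (Bk E tgt \<theta> k) ** Bk E tgt \<theta> k ** H"

definition normalized_rows :: "real^'p::{finite,linorder}^'d \<Rightarrow> bool" where
  "normalized_rows H \<longleftrightarrow> (\<forall>r. (\<forall>c. \<bar>H $ r $ c\<bar> \<le> 1) \<and> (\<exists>c. \<bar>H $ r $ c\<bar> = 1) \<and>
      (\<forall>c. \<bar>H $ r $ c\<bar> = 1 \<and> (\<forall>c'<c. \<bar>H $ r $ c'\<bar> \<noteq> 1) \<longrightarrow> H $ r $ c = 1))"

end

theory Submission
  imports Defs
begin

text \<open>Replacing row \<open>i\<^sub>k\<close> of \<open>B\<^sub>0\<close> by \<open>\<lambda>\<^sub>k e\<^sub>i\<^sub>k\<^sup>T\<close> changes the Gram matrix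
  \<open>B\<^sup>T B\<close> by a correction of rank at most two, and since \<open>H\<close> has full row rank,
  \<open>\<Theta>\<^sub>k - \<Theta>\<^sub>l\<close> has the same rank as \<open>D = B\<^sub>k\<^sup>T B\<^sub>k - B\<^sub>l\<^sup>T B\<^sub>l\<close>.
  If \<open>i\<^sub>k = i\<^sub>l = i\<close> then \<open>D = (\<lambda>\<^sub>k\<^sup>2 - \<lambda>\<^sub>l\<^sup>2) e\<^sub>i e\<^sub>i\<^sup>T\<close>, of rank one unless
  \<open>\<lambda>\<^sub>k\<^sup>2 = \<lambda>\<^sub>l\<^sup>2\<close>. If \<open>i\<^sub>k \<noteq> i\<^sub>l\<close>, the principal 2\<times>2 minor of \<open>D\<close> on \<open>{i\<^sub>k, i\<^sub>l}\<close>
  is a quadratic polynomial in \<open>\<lambda>\<^sub>k\<close> whose leading coefficient is a quadratic polynomial in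
  \<open>\<lambda>\<^sub>l\<close> with leading coefficient \<open>-1\<close>; by Tonelli it vanishes only on a null set, while
  every 2\<times>2 minor of a matrix of rank one vanishes.\<close>

lemma matrix_diff_ldistrib: "(A::real^'n^'m) ** (B - C) = A ** B - A ** (C::real^'p^'n)"
  by (simp add: vec_eq_iff matrix_matrix_mult_def sum_subtractf right_diff_distrib)

lemma matrix_diff_rdistrib: "((B::real^'n^'m) - C) ** (A::real^'p^'n) = B ** A - C ** A"
  by (simp add: vec_eq_iff matrix_matrix_mult_def sum_subtractf left_diff_distrib)

lemma rank_congruent_full_row_rank:
  fixes H :: "real^'p^'d" and M :: "real^'d^'d"
  assumes "rank H = CARD('d)"
  shows "rank (transpose H ** M ** H) = rank M"
proof (rule antisym)
  show "rank (transpose H ** M ** H) \<le> rank M"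
    by (metis rank_mul_le_left rank_mul_le_right order_trans)
  obtain R :: "real^'d^'p" where R: "H ** R = mat 1"
    using assms full_rank_surjective matrix_right_invertible_surjective by blast
  then have "transpose R ** transpose H = mat 1"
    by (metis matrix_transpose_mul transpose_mat)
  with R have "M = transpose R ** (transpose H ** M ** H) ** R"
    by (metis matrix_mul_assoc matrix_mul_lid matrix_mul_rid)
  then show "rank M \<le> rank (transpose H ** M ** H)"
    by (metis rank_mul_le_left rank_mul_le_right order_trans)
qed

lemma rank_le_1_minor_eq_0:
  fixes A :: "real^'n^'m"
  assumes "rank A \<le> 1"
  shows "A $ a $ a' * A $ b $ b' - A $ a $ b' * A $ b $ a' = 0"
proof -
  obtain B where B: "independent B" "range ((*v) A) \<subseteq> span B" "card B = rank A"
    using basis_exists[of "range ((*v) A)"] rank_dim_range by metis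
  have "finite B" "card B \<le> 1"
    using B(1,3) assms finiteI_independent by auto
  then have "\<exists>v. B \<subseteq> {v}"
    unfolding subset_singleton_iff_Uniq Uniq_def by (auto simp: card_le_Suc0_iff_eq)
  then obtain v where "B \<subseteq> {v}"
    by blast
  then have "A *v axis c 1 \<in> span {v}" for c
    using B(2) span_mono by blast
  then have "\<exists>s. A *v axis c 1 = s *\<^sub>R v" for c
    by (auto simp: span_singleton)
  then obtain s where s: "\<And>c. A *v axis c 1 = s c *\<^sub>R v"
    by metis
  have "A $ r $ c = s c * v $ r" for r c
    using arg_cong[OF s[of c], of "\<lambda>w. w $ r"] by (simp add: matrix_vector_mult_basis column_def)
  then show ?thesis
    by simp
qed

lemma rank_single_entry:
  fixes c :: real
  assumes "c \<noteq> 0"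
  shows "rank (\<chi> a b. if a = i \<and> b = i then c else 0 :: real^'n^'n) = 1"
    (is "rank ?M = 1")
proof -
  have "?M *v x = (c * x $ i) *\<^sub>R axis i 1" for x
    by (auto simp: vec_eq_iff matrix_vector_mult_def axis_def if_distrib[of "\<lambda>t. t * _"]
        cong: if_cong)
  then have "range ((*v) ?M) \<subseteq> span {axis i 1}"
    by (auto intro: span_mul span_base)
  from dim_le_card[OF this] have "rank ?M \<le> 1"
    by (simp add: rank_dim_range)
  moreover have "?M \<noteq> 0"
    using assms by (auto simp: vec_eq_iff)
  ultimately show ?thesis
    by (simp add: rank_eq_0 le_Suc_eq)
qed

definition gram :: "real^'n^'m \<Rightarrow> real^'n^'n" where
  "gram B = transpose B ** B"

lemma gram_row_update:
  fixes B :: "real^'n^'m"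
  shows "gram (\<chi> s. if s = r then v else B $ s) $ a $ b
           = gram B $ a $ b - B $ r $ a * B $ r $ b + v $ a * v $ b"
proof -
  have row_sum: "(\<Sum>s\<in>UNIV. f s) = f r + (\<Sum>s\<in>UNIV - {r}. f s)" for f :: "'m \<Rightarrow> real"
    by (simp add: sum.remove)
  show ?thesis
    unfolding gram_def matrix_matrix_mult_def transpose_def
    by (simp add: row_sum[of "\<lambda>s. B $ s $ a * B $ s $ b"]
        row_sum[of "\<lambda>s. (if s = r then v else B $ s) $ a * (if s = r then v else B $ s) $ b"])
qed

lemma AE_quadratic_in_coordinate_nonzero:
  fixes g h :: "('a \<Rightarrow> real) \<Rightarrow> real"
  assumes I: "finite I" "c \<in> I"
    and g: "g \<in> borel_measurable (Pi\<^sub>M I (\<lambda>_. lborel))" "\<And>\<theta> x. g (\<theta>(c := x)) = g \<theta>"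
    and h: "h \<in> borel_measurable (Pi\<^sub>M I (\<lambda>_. lborel))" "\<And>\<theta> x. h (\<theta>(c := x)) = h \<theta>"
  shows "AE \<theta> in Pi\<^sub>M I (\<lambda>_. lborel). g \<theta> \<noteq> 0 \<longrightarrow> g \<theta> * (\<theta> c)\<^sup>2 + h \<theta> \<noteq> 0"
proof -
  interpret product_sigma_finite "\<lambda>_. lborel" by standard
  define J where "J = I - {c}"
  have IJ: "I = insert c J" "c \<notin> J" "finite J"
    using I by (auto simp: J_def)
  let ?M = "Pi\<^sub>M I (\<lambda>_. lborel) :: ('a \<Rightarrow> real) measure"
  let ?S = "{\<theta> \<in> space ?M. g \<theta> \<noteq> 0 \<and> g \<theta> * (\<theta> c)\<^sup>2 + h \<theta> = 0}"
  have S: "?S \<in> sets ?M"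
    using g h I(2) by measurable
  have fibre_null: "(\<integral>\<^sup>+ y. indicator ?S (x(c := y)) \<partial>lborel) = 0" for x
  proof -
    let ?r = "sqrt (- h x / g x)"
    have "y \<in> {?r, - ?r}" if "x(c := y) \<in> ?S" for y
    proof -
      from that have "g x \<noteq> 0" "g x * y\<^sup>2 + h x = 0"
        using g(2) h(2) by auto
      then have "\<bar>y\<bar> = ?r"
        by (metis real_sqrt_abs add_eq_0_iff2 nonzero_mult_div_cancel_left minus_divide_left)
      then show ?thesis
        by auto
    qed
    then have "(\<integral>\<^sup>+ y. indicator ?S (x(c := y)) \<partial>lborel)
        \<le> (\<integral>\<^sup>+ y. indicator {?r, - ?r} y \<partial>lborel)"
      by (intro nn_integral_mono) (auto simp: indicator_def)
    also have "\<dots> = 0"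
      by (simp add: emeasure_lborel_countable)
    finally show ?thesis
      by simp
  qed
  have "emeasure ?M ?S
      = (\<integral>\<^sup>+ x. (\<integral>\<^sup>+ y. indicator ?S (x(c := y)) \<partial>lborel) \<partial>Pi\<^sub>M J (\<lambda>_. lborel))"
    using S IJ by (simp add: product_nn_integral_insert flip: nn_integral_indicator)
  also have "\<dots> = 0"
    by (simp add: fibre_null)
  finally have "?S \<in> null_sets ?M"
    using S by (simp add: null_sets_def)
  then show ?thesis
    by (rule AE_I') auto
qed

lemma Bk_eq_row_update:
  "Bk E tgt \<theta> k = (\<chi> s. if s = tgt k then \<theta> (Lam k) *\<^sub>R axis (tgt k) 1 else B0 E \<theta> $ s)"
  by (simp add: Bk_def Let_def vec_eq_iff axis_def transpose_def matrix_vector_mult_def if_distrib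
      cong: if_cong)

lemma gram_Bk:
  "gram (Bk E tgt \<theta> k) $ a $ b
     = gram (B0 E \<theta>) $ a $ b - B0 E \<theta> $ tgt k $ a * B0 E \<theta> $ tgt k $ b
       + (if a = tgt k \<and> b = tgt k then (\<theta> (Lam k))\<^sup>2 else 0)"
  by (simp add: Bk_eq_row_update gram_row_update axis_def power2_eq_square)

lemma Theta_diff_congruent:
  "Theta E tgt H \<theta> k - Theta E tgt H \<theta> l
     = transpose H ** (gram (Bk E tgt \<theta> k) - gram (Bk E tgt \<theta> l)) ** H"
  by (simp add: Theta_def gram_def matrix_diff_ldistrib matrix_diff_rdistrib matrix_mul_assoc)

lemma measurable_B0_entry:
  "(\<lambda>\<theta>. B0 E \<theta> $ a $ b) \<in> borel_measurable (param_measure E K)"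
proof -
  have "Diag a \<in> param_index E K" "(b, a) \<in> E \<Longrightarrow> Edge a b \<in> param_index E K"
    by (force simp: param_index_def)+
  then show ?thesis
    unfolding param_measure_def B0_def
    by (cases "a = b"; cases "(b, a) \<in> E") (simp_all, measurable)
qed

lemma B0_Lam_update [simp]: "B0 E (\<theta>(Lam k := x)) = B0 E \<theta>"
  by (simp add: B0_def vec_eq_iff)

definition generic_pair ::
    "('d::finite \<times> 'd) set \<Rightarrow> (nat \<Rightarrow> 'd) \<Rightarrow> ('d param \<Rightarrow> real) \<Rightarrow> nat \<Rightarrow> nat \<Rightarrow> bool" where
  "generic_pair E tgt \<theta> k l \<longleftrightarrow>
     (if tgt k = tgt l then (\<theta> (Lam k))\<^sup>2 \<noteq> (\<theta> (Lam l))\<^sup>2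
      else let D = gram (Bk E tgt \<theta> k) - gram (Bk E tgt \<theta> l); i = tgt k; j = tgt l
           in D $ i $ i * D $ j $ j - D $ i $ j * D $ j $ i \<noteq> 0)"

lemma rank_Theta_diff_eq_1_iff:
  fixes H :: "real^'p^'d::finite"
  assumes "rank H = CARD('d)" "generic_pair E tgt \<theta> k l"
  shows "rank (Theta E tgt H \<theta> k - Theta E tgt H \<theta> l) = 1 \<longleftrightarrow> tgt k = tgt l"
proof -
  define D where "D = gram (Bk E tgt \<theta> k) - gram (Bk E tgt \<theta> l)"
  have rank_eq: "rank (Theta E tgt H \<theta> k - Theta E tgt H \<theta> l) = rank D"
    by (simp add: D_def Theta_diff_congruent rank_congruent_full_row_rank[OF assms(1)])
  show ?thesis
  proof (cases "tgt k = tgt l")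
    case True
    then have "D = (\<chi> a b. if a = tgt k \<and> b = tgt k then (\<theta> (Lam k))\<^sup>2 - (\<theta> (Lam l))\<^sup>2 else 0)"
      by (simp add: D_def vec_eq_iff gram_Bk)
    moreover have "(\<theta> (Lam k))\<^sup>2 - (\<theta> (Lam l))\<^sup>2 \<noteq> 0"
      using assms(2) True by (simp add: generic_pair_def)
    ultimately have "rank D = 1"
      using rank_single_entry by metis
    then show ?thesis
      using rank_eq True by simp
  next
    case False
    then have "D $ tgt k $ tgt k * D $ tgt l $ tgt l - D $ tgt k $ tgt l * D $ tgt l $ tgt k \<noteq> 0"
      using assms(2) by (simp add: generic_pair_def D_def Let_def)
    then have "rank D \<noteq> 1"
      using rank_le_1_minor_eq_0[of D "tgt k" "tgt k" "tgt l" "tgt l"] by linarith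
    then show ?thesis
      using rank_eq False by simp
  qed
qed

lemma AE_generic_pair:
  fixes E :: "('d::finite \<times> 'd) set"
  assumes "k \<in> {1..K}" "l \<in> {1..K}" "k \<noteq> l"
  shows "AE \<theta> in param_measure E K. generic_pair E tgt \<theta> k l"
proof -
  let ?I = "param_index E K"
  have I: "finite ?I" "Lam k \<in> ?I" "Lam l \<in> ?I"
    using assms by (auto simp: param_index_def intro: finite_subset[of E UNIV])
  note [measurable] = measurable_B0_entry[where E = E and K = K, unfolded param_measure_def]
  show ?thesis
  proof (cases "tgt k = tgt l")
    case True
    have "AE \<theta> in Pi\<^sub>M ?I (\<lambda>_. lborel).
        (1::real) \<noteq> 0 \<longrightarrow> 1 * (\<theta> (Lam k))\<^sup>2 + - (\<theta> (Lam l))\<^sup>2 \<noteq> (0::real)"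
      by (rule AE_quadratic_in_coordinate_nonzero) (use I assms(3) in auto)
    then show ?thesis
      using True unfolding param_measure_def generic_pair_def by simp
  next
    case False
    define b where "b r s \<theta> = B0 E \<theta> $ r $ s" for r s \<theta>
    define \<alpha> where "\<alpha> \<theta> = (b (tgt l) (tgt k) \<theta>)\<^sup>2 - (b (tgt k) (tgt k) \<theta>)\<^sup>2" for \<theta>
    define \<beta> where "\<beta> \<theta> = (b (tgt l) (tgt l) \<theta>)\<^sup>2 - (b (tgt k) (tgt l) \<theta>)\<^sup>2" for \<theta>
    define \<gamma> where
      "\<gamma> \<theta> = b (tgt l) (tgt k) \<theta> * b (tgt l) (tgt l) \<theta> - b (tgt k) (tgt k) \<theta> * b (tgt k) (tgt l) \<theta>"
      for \<theta>
    define \<delta> where "\<delta> \<theta> = \<beta> \<theta> - (\<theta> (Lam l))\<^sup>2" for \<theta>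
    have minor:
      "generic_pair E tgt \<theta> k l \<longleftrightarrow> \<delta> \<theta> * (\<theta> (Lam k))\<^sup>2 + (\<alpha> \<theta> * \<delta> \<theta> - (\<gamma> \<theta>)\<^sup>2) \<noteq> 0" for \<theta>
      using False unfolding generic_pair_def Let_def
      by (simp add: gram_Bk \<alpha>_def \<beta>_def \<gamma>_def \<delta>_def b_def algebra_simps power2_eq_square)
    have "AE \<theta> in Pi\<^sub>M ?I (\<lambda>_. lborel). -1 \<noteq> (0::real) \<longrightarrow> -1 * (\<theta> (Lam l))\<^sup>2 + \<beta> \<theta> \<noteq> 0"
      by (rule AE_quadratic_in_coordinate_nonzero) (use I in \<open>auto simp: \<beta>_def b_def\<close>)
    moreover have "AE \<theta> in Pi\<^sub>M ?I (\<lambda>_. lborel).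
        \<delta> \<theta> \<noteq> 0 \<longrightarrow> \<delta> \<theta> * (\<theta> (Lam k))\<^sup>2 + (\<alpha> \<theta> * \<delta> \<theta> - (\<gamma> \<theta>)\<^sup>2) \<noteq> 0"
      by (rule AE_quadratic_in_coordinate_nonzero)
        (use I assms(3) in \<open>auto simp: \<alpha>_def \<beta>_def \<gamma>_def \<delta>_def b_def\<close>)
    ultimately show ?thesis
      unfolding param_measure_def by eventually_elim (simp add: minor \<delta>_def)
  qed
qed

theorem proposition9:
  fixes E :: "('d::{finite,linorder} \<times> 'd) set"
    and K :: nat
    and tgt :: "nat \<Rightarrow> 'd"
    and H :: "real^'p::{finite,linorder}^'d::{finite,linorder}"
  assumes edges_ordered: "\<forall>(j,i)\<in>E. i < j"
    and dims: "CARD('d) \<le> CARD('p)"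
    and H_rank: "rank H = CARD('d)"
    and H_norm: "normalized_rows H"
  shows "\<exists>N \<in> null_sets (param_measure E K).
           \<forall>\<theta> \<in> space (param_measure E K). admissible E K \<theta> \<and> \<theta> \<notin> N \<longrightarrow>
             (\<forall>k\<in>{1..K}. \<forall>l\<in>{1..K}. k \<noteq> l \<longrightarrow>
                (rank (Theta E tgt H \<theta> k - Theta E tgt H \<theta> l) = 1 \<longleftrightarrow> tgt k = tgt l))"
proof -
  have "AE \<theta> in param_measure E K. \<forall>k\<in>{1..K}. \<forall>l\<in>{1..K} - {k}. generic_pair E tgt \<theta> k l"
  proof (intro AE_finite_allI)
    show "AE \<theta> in param_measure E K. generic_pair E tgt \<theta> k l"
      if "k \<in> {1..K}" "l \<in> {1..K} - {k}" for k l
      using that by (intro AE_generic_pair) auto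
  qed simp_all
  then obtain N where generic: "\<And>\<theta>. \<theta> \<in> space (param_measure E K) - N \<Longrightarrow>
      \<forall>k\<in>{1..K}. \<forall>l\<in>{1..K} - {k}. generic_pair E tgt \<theta> k l"
    and N: "N \<in> null_sets (param_measure E K)"
    by (erule AE_E3)
  have rank_criterion: "rank (Theta E tgt H \<theta> k - Theta E tgt H \<theta> l) = 1 \<longleftrightarrow> tgt k = tgt l"
    if "\<theta> \<in> space (param_measure E K)" "\<theta> \<notin> N" "k \<in> {1..K}" "l \<in> {1..K}" "k \<noteq> l" for \<theta> k l
    using that generic by (intro rank_Theta_diff_eq_1_iff[OF H_rank]) blast
  show ?thesis
    by (intro bexI[OF _ N] ballI impI rank_criterion) auto
qed

end
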